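(* Let $h:\mathbb{R}^n\to\mathbb{R}\cup\{+\infty\}$ be a proper closed convex function and $F:\mathbb{R}^n\to\mathbb{R}$ a convex function, $f:=F+h$, and suppose $f$ attains its minimum value $f^*$ at some $x^*$. Let $q\in[0,2)$, $L>0$, $\delta\ge0$, and suppose that for every $y\in\mathrm{dom}\, f$ one can compute $g(y)$ with $$0\le F(x)-\big(F(y)+\langle g(y),x-y\rangle\big)\le \frac{L}{2}\|x-y\|^2+\delta\|x-y\|^q\quad\text{for all }x\in\mathrm{dom}\, f.$$ Let $\rho>0$, $\alpha=\frac{1}{L+q\rho}$, $x_0\in\mathrm{dom}\, h$, and $x_{k+1}=\mathrm{prox}_{\alpha h}(x_k-\alpha g(x_k))$ for $k\ge0$, where $\mathrm{prox}_{\gamma h}(z):=\arg\min_{y\in\mathrm{dom}\, h}\{h(y)+\tfrac{1}{2\gamma}\|z-y\|^2\}$. Define $\hat x_k=\frac{1}{k+1}\sum_{i=0}^{k}x_{i+1}$ and $R=\|x_0-x^*\|$. Then for all $k\ge1$, $$f(\hat x_k)-f^*\le \frac{(L+q\rho)R^2}{2k}+\frac{(2-q)\,\delta^{\frac{2}{2-q}}}{2\rho^{\frac{q}{2-q}}}.$$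
   Context: $\|\cdot\|$ is the Euclidean norm. The two-sided inequality on $g(y)$ is the paper's "inexact first-order $(\delta,L)$-oracle of degree $q$" for convex $F$. *)

theory Defs
  imports "HOL-Analysis.Analysis"
begin

definition edom :: "('a \<Rightarrow> ereal) \<Rightarrow> 'a set" where
  "edom h = {x. h x < \<infinity>}"

definition epigraph :: "('a \<Rightarrow> ereal) \<Rightarrow> ('a \<times> real) set" where
  "epigraph h = {(x, t). h x \<le> ereal t}"

definition proper_fun :: "('a \<Rightarrow> ereal) \<Rightarrow> bool" where
  "proper_fun h \<longleftrightarrow> (\<forall>x. h x \<noteq> -\<infinity>) \<and> edom h \<noteq> {}"

definition closed_fun :: "('a::topological_space \<Rightarrow> ereal) \<Rightarrow> bool" where
  "closed_fun h \<longleftrightarrow> closed (epigraph h)"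

definition convex_fun :: "('a::real_vector \<Rightarrow> ereal) \<Rightarrow> bool" where
  "convex_fun h \<longleftrightarrow> convex (epigraph h)"

definition prox_set :: "real \<Rightarrow> ('a::real_normed_vector \<Rightarrow> ereal) \<Rightarrow> 'a \<Rightarrow> 'a set" where
  "prox_set \<gamma> h z = {p \<in> edom h. \<forall>y \<in> edom h.
      h p + ereal ((norm (z - p))\<^sup>2 / (2 * \<gamma>)) \<le> h y + ereal ((norm (z - y))\<^sup>2 / (2 * \<gamma>))}"

end

theory Submission
  imports Defs
begin

(* Strong convexity of the prox objective gives a three-point inequality for each step; combined
   with the two oracle bounds it yields
     f(x_{i+1}) - f(u) <= (|x_i - u|^2 - |x_{i+1} - u|^2 - d^2) / (2 alpha) + L/2 d^2 + delta d^q,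
   where d = |x_{i+1} - x_i|. Since 1/alpha = L + q rho, the surplus q rho/2 d^2 absorbs delta d^q
   up to the constant (2-q) delta^(2/(2-q)) / (2 rho^(q/(2-q))), by Young's inequality with the
   conjugate exponents 2/q and 2/(2-q). Summing over the steps telescopes, and Jensen's inequality
   for the convex f passes from the average of the values to the value at the averaged iterate. *)

lemma powr_le_square_plus_young_const:
  fixes q d \<delta> \<rho> :: real
  assumes q: "0 \<le> q" "q < 2" and d: "0 \<le> d" and \<delta>: "0 \<le> \<delta>" and \<rho>: "0 < \<rho>"
  shows "\<delta> * d powr q \<le> q * \<rho> / 2 * d\<^sup>2 + (2 - q) * \<delta> powr (2 / (2 - q)) / (2 * \<rho> powr (q / (2 - q)))"
proof -
  consider "q = 0" | "d = 0 \<or> \<delta> = 0" | "0 < q" "0 < d" "0 < \<delta>"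
    using q d \<delta> by fastforce
  then show ?thesis
  proof cases
    case 1
    have "\<delta> * d powr 0 \<le> \<delta>"
      using \<delta> by (simp add: mult_left_le powr_def)
    then show ?thesis using 1 \<delta> \<rho> by simp
  next
    case 2
    then show ?thesis using q \<delta> \<rho> by auto
  next
    case 3
    define a where "a = \<rho> powr (q/2) * d powr q"
    define b where "b = \<delta> * \<rho> powr (- q/2)"
    have a_pow: "a powr (2/q) = \<rho> * d\<^sup>2"
    proof -
      have "a powr (2/q) = \<rho> powr (q/2 * (2/q)) * d powr (q * (2/q))"
        unfolding a_def by (simp add: powr_mult powr_powr)
      also have "q/2 * (2/q) = 1" using \<open>0 < q\<close> by simp
      also have "q * (2/q) = 2" using \<open>0 < q\<close> by simp
      finally show ?thesis using \<rho> \<open>0 < d\<close> by (simp add: powr_numeral)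
    qed
    have b_pow: "b powr (2/(2-q)) = \<delta> powr (2/(2-q)) / \<rho> powr (q/(2-q))"
    proof -
      have "b powr (2/(2-q)) = \<delta> powr (2/(2-q)) * \<rho> powr (- q/2 * (2/(2-q)))"
        unfolding b_def using \<delta> by (simp add: powr_mult powr_powr)
      also have "- q/2 * (2/(2-q)) = - (q/(2-q))" using q by (simp add: field_simps)
      finally show ?thesis by (simp add: powr_minus divide_inverse)
    qed
    have "\<delta> * d powr q = a * b"
      using \<rho> by (simp add: a_def b_def powr_minus field_simps)
    also have "\<dots> \<le> a powr (2/q) / (2/q) + b powr (2/(2-q)) / (2/(2-q))"
      by (rule Youngs_inequality) (use \<open>0 < q\<close> q \<open>0 < \<delta>\<close> in \<open>auto simp: a_def b_def field_simps\<close>)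
    finally show ?thesis
      unfolding a_pow b_pow by (simp add: ac_simps)
  qed
qed

lemma power2_norm_diff_scaleR:
  fixes a b :: "'a::real_inner"
  shows "(norm (a - t *\<^sub>R b))\<^sup>2 = (norm a)\<^sup>2 - 2 * t * inner a b + t\<^sup>2 * (norm b)\<^sup>2"
  unfolding power2_norm_eq_inner
  by (simp add: inner_diff_left inner_diff_right inner_commute power2_eq_square algebra_simps)

lemma le_of_le_plus_small_multiples:
  fixes a b c :: real
  assumes "\<And>t. 0 < t \<Longrightarrow> t \<le> 1 \<Longrightarrow> a \<le> b + t * c"
  shows "a \<le> b"
proof (rule tendsto_lowerbound)
  show "((\<lambda>t. b + t * c) \<longlongrightarrow> b) (at_right 0)"
    by (auto intro!: tendsto_eq_intros)
  show "\<forall>\<^sub>F t in at_right 0. a \<le> b + t * c"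
    using eventually_at_right_real[of 0 1] by (rule eventually_mono) (auto intro: assms)
qed simp

lemma convex_prox_optimality:
  fixes H :: "'a::real_inner \<Rightarrow> real"
  assumes H: "convex_on C H" and \<alpha>: "\<alpha> > 0" and p: "p \<in> C" and u: "u \<in> C"
    and p_min: "\<And>y. y \<in> C \<Longrightarrow> H p + (norm (z - p))\<^sup>2 / (2 * \<alpha>) \<le> H y + (norm (z - y))\<^sup>2 / (2 * \<alpha>)"
  shows "inner (z - p) (u - p) \<le> \<alpha> * (H u - H p)"
proof (rule le_of_le_plus_small_multiples)
  fix t :: real assume t: "0 < t" "t \<le> 1"
  define w where "w = (1 - t) *\<^sub>R p + t *\<^sub>R u"
  have "w \<in> C"
    using convex_on_imp_convex[OF H] p u t by (simp add: w_def convex_alt)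
  have "z - w = (z - p) - t *\<^sub>R (u - p)"
    by (simp add: w_def algebra_simps)
  then have "(norm (z - w))\<^sup>2 = (norm (z - p))\<^sup>2 - 2 * t * inner (z - p) (u - p) + t\<^sup>2 * (norm (u - p))\<^sup>2"
    by (simp only: power2_norm_diff_scaleR)
  moreover have "2 * \<alpha> * H w \<le> 2 * \<alpha> * H p + t * (2 * \<alpha> * (H u - H p))"
  proof -
    have "H w \<le> (1 - t) * H p + t * H u"
      unfolding w_def using convex_onD[OF H] t p u by simp
    then have "2 * \<alpha> * H w \<le> 2 * \<alpha> * ((1 - t) * H p + t * H u)"
      using \<alpha> by simp
    then show ?thesis by (simp add: algebra_simps)
  qed
  moreover have "2 * \<alpha> * H p + (norm (z - p))\<^sup>2 \<le> 2 * \<alpha> * H w + (norm (z - w))\<^sup>2"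
    using mult_left_mono[OF p_min[OF \<open>w \<in> C\<close>], of "2 * \<alpha>"] \<alpha> by (simp add: distrib_left)
  ultimately have "t * (2 * inner (z - p) (u - p)) \<le> t * (2 * \<alpha> * (H u - H p) + t * (norm (u - p))\<^sup>2)"
    by (simp add: algebra_simps power2_eq_square)
  then have "2 * inner (z - p) (u - p) \<le> 2 * \<alpha> * (H u - H p) + t * (norm (u - p))\<^sup>2"
    using t by simp
  then show "inner (z - p) (u - p) \<le> \<alpha> * (H u - H p) + t * ((norm (u - p))\<^sup>2 / 2)"
    by simp
qed

lemma convex_prox_three_point:
  fixes H :: "'a::real_inner \<Rightarrow> real"
  assumes H: "convex_on C H" and \<alpha>: "\<alpha> > 0" and p: "p \<in> C" and u: "u \<in> C"
    and p_min: "\<And>y. y \<in> C \<Longrightarrow> H p + (norm (z - p))\<^sup>2 / (2 * \<alpha>) \<le> H y + (norm (z - y))\<^sup>2 / (2 * \<alpha>)"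
  shows "H p + (norm (z - p))\<^sup>2 / (2 * \<alpha>) + (norm (u - p))\<^sup>2 / (2 * \<alpha>) \<le> H u + (norm (z - u))\<^sup>2 / (2 * \<alpha>)"
proof -
  define I where "I = inner (z - p) (u - p)"
  have "z - u = (z - p) - 1 *\<^sub>R (u - p)" by simp
  then have "(norm (z - u))\<^sup>2 = (norm (z - p))\<^sup>2 - 2 * I + (norm (u - p))\<^sup>2"
    unfolding I_def by (simp only: power2_norm_diff_scaleR) simp
  then have "(norm (z - u))\<^sup>2 / (2 * \<alpha>) = (norm (z - p))\<^sup>2 / (2 * \<alpha>) - I / \<alpha> + (norm (u - p))\<^sup>2 / (2 * \<alpha>)"
    using \<alpha> by (simp add: field_simps)
  moreover have "I / \<alpha> \<le> H u - H p"
    using convex_prox_optimality[OF assms] \<alpha> by (simp add: I_def divide_le_eq mult.commute)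
  ultimately show ?thesis by linarith
qed

lemma convex_funD:
  assumes "convex_fun h" "h a \<le> ereal s" "h b \<le> ereal t" "0 \<le> u" "0 \<le> v" "u + v = 1"
  shows "h (u *\<^sub>R a + v *\<^sub>R b) \<le> ereal (u * s + v * t)"
proof -
  have "u *\<^sub>R (a, s) + v *\<^sub>R (b, t) \<in> Defs.epigraph h"
    using assms unfolding convex_fun_def by (intro convexD) (auto simp: Defs.epigraph_def)
  then show ?thesis by (simp add: Defs.epigraph_def)
qed

lemma proper_fun_edomE:
  assumes "proper_fun h" "y \<in> edom h"
  obtains r where "h y = ereal r"
  using assms by (cases "h y") (auto simp: edom_def proper_fun_def)

lemma edom_ereal_plus:
  assumes "proper_fun h"
  shows "edom (\<lambda>y. ereal (F y) + h y) = edom h"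
proof -
  have "ereal (F y) + h y < \<infinity> \<longleftrightarrow> h y < \<infinity>" for y
    using assms by (cases "h y") (auto simp: proper_fun_def)
  then show ?thesis
    by (simp add: edom_def)
qed

lemma convex_fun_convex_edom:
  assumes "convex_fun h"
  shows "convex (edom h)"
  unfolding convex_def
proof (intro ballI allI impI)
  fix a b and u v :: real
  assume a: "a \<in> edom h" and b: "b \<in> edom h" and uv: "0 \<le> u" "0 \<le> v" "u + v = 1"
  have "h y \<le> ereal (real_of_ereal (h y))" if "y \<in> edom h" for y
    using that by (cases "h y") (simp_all add: edom_def)
  then have "h (u *\<^sub>R a + v *\<^sub>R b) \<le> ereal (u * real_of_ereal (h a) + v * real_of_ereal (h b))"
    using a b by (intro convex_funD[OF assms _ _ uv])
  also have "\<dots> < \<infinity>" by simp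
  finally show "u *\<^sub>R a + v *\<^sub>R b \<in> edom h"
    by (simp add: edom_def)
qed

lemma proper_convex_fun_convex_on_edom:
  assumes "proper_fun h" "convex_fun h"
  shows "convex_on (edom h) (\<lambda>y. real_of_ereal (h y))"
  unfolding convex_on_def
proof (intro conjI ballI allI impI)
  show "convex (edom h)"
    using assms(2) by (rule convex_fun_convex_edom)
  fix a b and u v :: real
  assume a: "a \<in> edom h" and b: "b \<in> edom h" and uv: "0 \<le> u" "0 \<le> v" "u + v = 1"
  obtain s where s: "h a = ereal s" using assms(1) a by (rule proper_fun_edomE)
  obtain t where t: "h b = ereal t" using assms(1) b by (rule proper_fun_edomE)
  have "u *\<^sub>R a + v *\<^sub>R b \<in> edom h"
    using convexD[OF \<open>convex (edom h)\<close> a b uv] .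
  then obtain r where r: "h (u *\<^sub>R a + v *\<^sub>R b) = ereal r"
    using assms(1) by (elim proper_fun_edomE)
  have "h (u *\<^sub>R a + v *\<^sub>R b) \<le> ereal (u * s + v * t)"
    using convex_funD[OF assms(2) _ _ uv] s t by simp
  then show "real_of_ereal (h (u *\<^sub>R a + v *\<^sub>R b)) \<le> u * real_of_ereal (h a) + v * real_of_ereal (h b)"
    using r s t by simp
qed

lemma prox_set_three_point:
  fixes h :: "'a::real_inner \<Rightarrow> ereal"
  assumes h: "proper_fun h" "convex_fun h" and \<alpha>: "\<alpha> > 0"
    and p: "p \<in> prox_set \<alpha> h z" and u: "u \<in> edom h"
  shows "real_of_ereal (h p) + (norm (z - p))\<^sup>2 / (2 * \<alpha>) + (norm (u - p))\<^sup>2 / (2 * \<alpha>)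
    \<le> real_of_ereal (h u) + (norm (z - u))\<^sup>2 / (2 * \<alpha>)"
proof (rule convex_prox_three_point[OF proper_convex_fun_convex_on_edom[OF h] \<alpha> _ u])
  show "p \<in> edom h" using p by (simp add: prox_set_def)
  then obtain r where r: "h p = ereal r" using h(1) by (elim proper_fun_edomE)
  fix y assume "y \<in> edom h"
  then obtain s where s: "h y = ereal s" using h(1) by (elim proper_fun_edomE)
  have "h p + ereal ((norm (z - p))\<^sup>2 / (2 * \<alpha>)) \<le> h y + ereal ((norm (z - y))\<^sup>2 / (2 * \<alpha>))"
    using p \<open>y \<in> edom h\<close> by (simp add: prox_set_def)
  then show "real_of_ereal (h p) + (norm (z - p))\<^sup>2 / (2 * \<alpha>)
      \<le> real_of_ereal (h y) + (norm (z - y))\<^sup>2 / (2 * \<alpha>)"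
    using r s by simp
qed

lemma inexact_prox_grad_step:
  fixes h :: "'a::real_inner \<Rightarrow> ereal" and F :: "'a \<Rightarrow> real"
  assumes h: "proper_fun h" "convex_fun h" and \<alpha>: "\<alpha> > 0"
    and p: "p \<in> prox_set \<alpha> h (x - \<alpha> *\<^sub>R G)" and u: "u \<in> edom h"
    and lower: "F x + inner G (u - x) \<le> F u"
    and upper: "F p \<le> F x + inner G (p - x) + e"
  shows "F p + real_of_ereal (h p) - (F u + real_of_ereal (h u))
    \<le> ((norm (x - u))\<^sup>2 - (norm (p - u))\<^sup>2 - (norm (p - x))\<^sup>2) / (2 * \<alpha>) + e"
proof -
  have shift: "(norm (x - \<alpha> *\<^sub>R G - y))\<^sup>2 / (2 * \<alpha>)
      = (norm (x - y))\<^sup>2 / (2 * \<alpha>) - inner G (x - y) + \<alpha> * (norm G)\<^sup>2 / 2" for y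
  proof -
    have "x - \<alpha> *\<^sub>R G - y = (x - y) - \<alpha> *\<^sub>R G" by simp
    then have "(norm (x - \<alpha> *\<^sub>R G - y))\<^sup>2 = (norm (x - y))\<^sup>2 - 2 * \<alpha> * inner (x - y) G + \<alpha>\<^sup>2 * (norm G)\<^sup>2"
      by (simp only: power2_norm_diff_scaleR)
    then show ?thesis
      using \<alpha> by (simp add: field_simps power2_eq_square inner_commute)
  qed
  have "inner G (p - u) = inner G (x - u) - inner G (x - p)"
    by (simp add: inner_diff_right)
  moreover have "(norm (u - p))\<^sup>2 = (norm (p - u))\<^sup>2" "(norm (x - p))\<^sup>2 = (norm (p - x))\<^sup>2"
    by (simp_all add: norm_minus_commute)
  moreover have "inner G (p - x) - inner G (u - x) = inner G (p - u)"
    by (simp add: inner_diff_right)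
  ultimately show ?thesis
    using prox_set_three_point[OF h \<alpha> p u] lower upper unfolding shift
    by (simp add: diff_divide_distrib add_divide_distrib)
qed

lemma prox_grad_step_inexact_oracle:
  fixes h :: "'a::real_inner \<Rightarrow> ereal" and F :: "'a \<Rightarrow> real"
  assumes h: "proper_fun h" "convex_fun h"
    and q: "0 \<le> q" "q < 2" and L: "L > 0" and \<delta>: "\<delta> \<ge> 0" and \<rho>: "\<rho> > 0"
    and \<alpha>_def: "\<alpha> = 1 / (L + q * \<rho>)"
    and p: "p \<in> prox_set \<alpha> h (x - \<alpha> *\<^sub>R G)" and u: "u \<in> edom h"
    and lower: "F x + inner G (u - x) \<le> F u"
    and upper: "F p \<le> F x + inner G (p - x) + (L / 2 * (norm (p - x))\<^sup>2 + \<delta> * norm (p - x) powr q)"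
  shows "F p + real_of_ereal (h p) - (F u + real_of_ereal (h u))
    \<le> (L + q * \<rho>) / 2 * ((norm (x - u))\<^sup>2 - (norm (p - u))\<^sup>2)
      + (2 - q) * \<delta> powr (2 / (2 - q)) / (2 * \<rho> powr (q / (2 - q)))"
proof -
  define d where "d = norm (p - x)"
  define X where "X = (norm (x - u))\<^sup>2 - (norm (p - u))\<^sup>2"
  have "L + q * \<rho> > 0" using L q \<rho> by (simp add: add_pos_nonneg)
  then have "\<alpha> > 0" by (simp add: \<alpha>_def)
  have "F p + real_of_ereal (h p) - (F u + real_of_ereal (h u)) \<le> (X - d\<^sup>2) / (2 * \<alpha>) + (L / 2 * d\<^sup>2 + \<delta> * d powr q)"
    using inexact_prox_grad_step[OF h \<open>\<alpha> > 0\<close> p u lower upper] unfolding X_def d_def by blast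
  moreover have "\<delta> * d powr q \<le> q * \<rho> / 2 * d\<^sup>2 + (2 - q) * \<delta> powr (2 / (2 - q)) / (2 * \<rho> powr (q / (2 - q)))"
    using q \<delta> \<rho> by (intro powr_le_square_plus_young_const) (auto simp: d_def)
  moreover have "(X - d\<^sup>2) / (2 * \<alpha>) = (L + q * \<rho>) / 2 * (X - d\<^sup>2)"
    unfolding \<alpha>_def by simp
  moreover have "(L + q * \<rho>) / 2 * (X - d\<^sup>2) = (L + q * \<rho>) / 2 * X - (L / 2 * d\<^sup>2 + q * \<rho> / 2 * d\<^sup>2)"
    by (simp add: field_simps)
  ultimately show ?thesis
    unfolding X_def by linarith
qed

lemma convex_on_average_le_telescoping:
  fixes \<Phi> :: "'a::real_vector \<Rightarrow> real" and y :: "nat \<Rightarrow> 'a" and a :: "nat \<Rightarrow> real"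
  assumes \<Phi>: "convex_on S \<Phi>" and y: "\<And>i. y i \<in> S"
    and descent: "\<And>i. \<Phi> (y i) - m \<le> a i - a (Suc i) + e"
    and "a (Suc k) \<ge> 0"
  shows "\<Phi> ((1 / real (k + 1)) *\<^sub>R (\<Sum>i\<le>k. y i)) - m \<le> a 0 / real (k + 1) + e"
proof -
  have "\<Phi> ((1 / real (k + 1)) *\<^sub>R (\<Sum>i\<le>k. y i)) \<le> (\<Sum>i\<le>k. 1 / real (k + 1) * \<Phi> (y i))"
    unfolding scaleR_sum_right by (rule convex_on_sum[OF _ _ \<Phi>]) (auto simp: y)
  also have "\<dots> = (\<Sum>i\<le>k. \<Phi> (y i) - m) / real (k + 1) + m"
    by (simp add: sum_subtractf sum_divide_distrib[symmetric] field_simps)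
  finally have jensen: "\<Phi> ((1 / real (k + 1)) *\<^sub>R (\<Sum>i\<le>k. y i)) - m \<le> (\<Sum>i\<le>k. \<Phi> (y i) - m) / real (k + 1)"
    by simp
  have "(\<Sum>i\<le>k. \<Phi> (y i) - m) \<le> (\<Sum>i\<le>k. a i - a (Suc i)) + real (k + 1) * e"
    using sum_mono[of "{..k}", OF descent] by (simp add: sum.distrib)
  also have "(\<Sum>i\<le>k. a i - a (Suc i)) = a 0 - a (Suc k)"
    by (rule sum_telescope)
  finally have "(\<Sum>i\<le>k. \<Phi> (y i) - m) / real (k + 1) \<le> (a 0 + real (k + 1) * e) / real (k + 1)"
    using \<open>a (Suc k) \<ge> 0\<close> by (intro divide_right_mono) auto
  with jensen show ?thesis
    by (simp add: add_divide_distrib)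
qed

theorem corollary2:
  fixes h :: "'a::euclidean_space \<Rightarrow> ereal"
    and F :: "'a \<Rightarrow> real"
    and f :: "'a \<Rightarrow> ereal"
    and g :: "'a \<Rightarrow> 'a"
    and x :: "nat \<Rightarrow> 'a"
    and xstar :: 'a
    and q L \<delta> \<rho> \<alpha> :: real
    and k :: nat
  assumes h_proper: "proper_fun h" and h_closed: "closed_fun h" and h_convex: "convex_fun h"
    and F_convex: "convex_on UNIV F"
    and f_def: "\<And>y. f y = ereal (F y) + h y"
    and xstar_min: "\<And>y. f xstar \<le> f y"
    and q: "0 \<le> q" "q < 2" and L: "L > 0" and \<delta>: "\<delta> \<ge> 0"
    and inexact_oracle: "\<And>y z. y \<in> edom f \<Longrightarrow> z \<in> edom f \<Longrightarrow>
        0 \<le> F z - (F y + inner (g y) (z - y)) \<and>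
        F z - (F y + inner (g y) (z - y)) \<le> L / 2 * (norm (z - y))\<^sup>2 + \<delta> * norm (z - y) powr q"
    and \<rho>: "\<rho> > 0"
    and \<alpha>_def: "\<alpha> = 1 / (L + q * \<rho>)"
    and x0: "x 0 \<in> edom h"
    and iter: "\<And>i. x (Suc i) \<in> prox_set \<alpha> h (x i - \<alpha> *\<^sub>R g (x i))"
    and k: "k \<ge> 1"
  shows "f ((1 / real (k + 1)) *\<^sub>R (\<Sum>i\<le>k. x (Suc i))) - f xstar
         \<le> ereal ((L + q * \<rho>) * (norm (x 0 - xstar))\<^sup>2 / (2 * real k)
                  + (2 - q) * \<delta> powr (2 / (2 - q)) / (2 * \<rho> powr (q / (2 - q))))"
proof -
  \<comment> \<open>Closedness of h only serves to make the proximal steps exist; here they are given by iter.\<close>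
  define C where "C = (2 - q) * \<delta> powr (2 / (2 - q)) / (2 * \<rho> powr (q / (2 - q)))"
  define \<Phi> where "\<Phi> y = F y + real_of_ereal (h y)" for y
  define r where "r i = (norm (x i - xstar))\<^sup>2" for i
  have "f = (\<lambda>y. ereal (F y) + h y)"
    using f_def by (rule ext)
  then have edom_f: "edom f = edom h"
    using edom_ereal_plus[OF h_proper] by simp
  have x_dom: "x i \<in> edom h" for i
    using x0 iter[of "i - 1"] by (cases i) (auto simp: prox_set_def)
  have "xstar \<in> edom f"
    using xstar_min[of "x 0"] x_dom[of 0] unfolding edom_f[symmetric] unfolding edom_def
    by (auto intro: le_less_trans)
  then have xstar_dom: "xstar \<in> edom h"
    by (simp add: edom_f)
  have step: "\<Phi> (x (Suc i)) - \<Phi> xstar \<le> (L + q * \<rho>) / 2 * r i - (L + q * \<rho>) / 2 * r (Suc i) + C" for i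
  proof -
    have "F (x i) + inner (g (x i)) (xstar - x i) \<le> F xstar"
      "F (x (Suc i)) \<le> F (x i) + inner (g (x i)) (x (Suc i) - x i)
         + (L / 2 * (norm (x (Suc i) - x i))\<^sup>2 + \<delta> * norm (x (Suc i) - x i) powr q)"
      using inexact_oracle[of "x i" xstar] inexact_oracle[of "x i" "x (Suc i)"] x_dom xstar_dom
      by (auto simp: edom_f)
    from prox_grad_step_inexact_oracle[OF h_proper h_convex q L \<delta> \<rho> \<alpha>_def iter xstar_dom this]
    show ?thesis by (simp add: \<Phi>_def r_def C_def right_diff_distrib)
  qed
  have \<Phi>_convex: "convex_on (edom h) \<Phi>"
    unfolding \<Phi>_def using proper_convex_fun_convex_on_edom[OF h_proper h_convex]
      convex_fun_convex_edom[OF h_convex]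
    by (intro convex_on_add convex_on_subset[OF F_convex]) auto
  define w where "w = (1 / real (k + 1)) *\<^sub>R (\<Sum>i\<le>k. x (Suc i))"
  have "w \<in> edom h"
    unfolding w_def scaleR_sum_right
    by (rule convex_sum[OF _ convex_fun_convex_edom[OF h_convex]]) (auto simp: x_dom)
  have "L + q * \<rho> > 0" using L q \<rho> by (simp add: add_pos_nonneg)
  have "\<Phi> w - \<Phi> xstar \<le> (L + q * \<rho>) / 2 * r 0 / real (k + 1) + C"
    unfolding w_def using \<open>L + q * \<rho> > 0\<close> x_dom step
    by (intro convex_on_average_le_telescoping[where a = "\<lambda>i. (L + q * \<rho>) / 2 * r i", OF \<Phi>_convex])
      (simp_all add: r_def)
  also have "\<dots> \<le> (L + q * \<rho>) * r 0 / (2 * real k) + C"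
    using k \<open>L + q * \<rho> > 0\<close> by (intro add_right_mono) (simp add: r_def frac_le)
  finally have "\<Phi> w - \<Phi> xstar \<le> (L + q * \<rho>) * r 0 / (2 * real k) + C" .
  moreover have "f y = ereal (\<Phi> y)" if y: "y \<in> edom h" for y
  proof -
    obtain a where "h y = ereal a" using h_proper y by (rule proper_fun_edomE)
    then show ?thesis by (simp add: f_def \<Phi>_def)
  qed
  ultimately show ?thesis
    using \<open>w \<in> edom h\<close> xstar_dom by (simp add: w_def C_def r_def)
qed

end
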